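(* Let $p$ be a prime, $q=p^n$, $d$ a natural number with $(d,p)=1$, $\psi$ a nontrivial additive character of $\mathbb{F}_p$, and $f\in\mathcal{F}_d$. Then $L_{\chi_f}(z)=(1-z)L_{f,\psi}(z)$. In particular the normalised nontrivial zeroes of $L_{\chi_f}$ coincide with the normalised zeroes of $L_{f,\psi}$.
   Context: $\mathcal{F}_d$ denotes the set of polynomials $f=\sum_{i=0}^d a_ix^i\in\mathbb{F}_q[x]$ with $a_d\neq 0$ and $a_i=0$ for every $i\ge 0$ divisible by $p$. $L_{f,\psi}(z)=\exp\left(\sum_{r\ge1}\sum_{\alpha\in\mathbb{F}_{q^r}}\psi(\mathrm{Tr}_{\mathbb{F}_{q^r}/\mathbb{F}_p}f(\alpha))z^r/r\right)$. For $f\in\mathcal{F}_d$, the Dirichlet character $\chi_f$ modulo $x^{d+1}$ is defined by: $\chi_f(g)=0$ if $x\mid g$; otherwise write $g(x)=g(0)\prod_{i=1}^k(1-\alpha_ix)$ with $\alpha_i$ in an algebraic closure of $\mathbb{F}_q$, and set $\chi_f(g)=\psi\left(\mathrm{Tr}_{\mathbb{F}_q/\mathbb{F}_p}\sum_{i=1}^kf(\alpha_i)\right)$. For a Dirichlet character $\chi$, $L_\chi(z)=\sum_{g}\chi(g)z^{\deg g}$, the sum over all monic $g\in\mathbb{F}_q[x]$; equivalently $\prod_h(1-\chi(h)z^{\deg h})^{-1}$ over monic irreducible $h$. *)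

theory Defs
  imports "HOL-Library.Cardinality" "HOL-Algebra.Algebraic_Closure_Type" "HOL-Computational_Algebra.Formal_Power_Series"
begin

text \<open>Finite fields F_{q^r} realised inside the algebraic closure of F_q = 'a.\<close>
definition ext_field :: "nat \<Rightarrow> 'a::{field,finite} alg_closure set" where
  "ext_field r = {x :: 'a alg_closure. x ^ (CARD('a) ^ r) = x}"

definition prime_field :: "nat \<Rightarrow> 'a::field alg_closure set" where
  "prime_field p = {x. x ^ p = x}"

definition abs_trace :: "nat \<Rightarrow> nat \<Rightarrow> 'b::comm_ring_1 \<Rightarrow> 'b" where
  "abs_trace p m y = (\<Sum>i<m. y ^ (p ^ i))"

text \<open>Nontrivial additive character of F_p (values only on F_p matter).\<close>
definition nontriv_add_char :: "nat \<Rightarrow> ('a::field alg_closure \<Rightarrow> complex) \<Rightarrow> bool" where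
  "nontriv_add_char p \<psi> \<longleftrightarrow>
     (\<forall>x\<in>prime_field p. \<psi> x \<noteq> 0) \<and>
     (\<forall>x\<in>prime_field p. \<forall>y\<in>prime_field p. \<psi> (x + y) = \<psi> x * \<psi> y) \<and>
     (\<exists>x\<in>prime_field p. \<psi> x \<noteq> 1)"

definition calF :: "nat \<Rightarrow> nat \<Rightarrow> 'a::field poly set" where
  "calF p d = {f. degree f = d \<and> coeff f d \<noteq> 0 \<and> (\<forall>i. p dvd i \<longrightarrow> coeff f i = 0)}"

definition char_sum :: "nat \<Rightarrow> nat \<Rightarrow> ('a::{field,finite} alg_closure \<Rightarrow> complex)
     \<Rightarrow> 'a poly \<Rightarrow> nat \<Rightarrow> complex" where
  "char_sum p n \<psi> f r =
     (\<Sum>\<alpha>\<in>ext_field r. \<psi> (abs_trace p (n * r) (poly (map_poly to_ac f) \<alpha>)))"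

definition L_f_psi :: "nat \<Rightarrow> nat \<Rightarrow> ('a::{field,finite} alg_closure \<Rightarrow> complex)
     \<Rightarrow> 'a poly \<Rightarrow> complex fps" where
  "L_f_psi p n \<psi> f =
     fps_exp 1 oo Abs_fps (\<lambda>r. if r = 0 then 0 else char_sum p n \<psi> f r / of_nat r)"

text \<open>chi_f(g): zero if x divides g; otherwise g(x) = g(0) prod (1 - alpha_i x),
  where the alpha_i are the inverses of the roots (with multiplicity) of g in the closure.\<close>
definition chi_f :: "nat \<Rightarrow> nat \<Rightarrow> ('a::{field,finite} alg_closure \<Rightarrow> complex)
     \<Rightarrow> 'a poly \<Rightarrow> 'a poly \<Rightarrow> complex" where
  "chi_f p n \<psi> f g =
     (if [:0, 1:] dvd g then 0
      else \<psi> (abs_trace p n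
              (\<Sum>\<beta>\<in>#proots (map_poly to_ac g). poly (map_poly to_ac f) (inverse \<beta>))))"

definition L_chi :: "('a::{field,finite} poly \<Rightarrow> complex) \<Rightarrow> complex fps" where
  "L_chi \<chi> = Abs_fps (\<lambda>N. \<Sum>g\<in>{g::'a poly. lead_coeff g = 1 \<and> degree g = N}. \<chi> g)"

end

theory Submission
  imports Defs "HOL-Combinatorics.Cycles" "HOL-Algebra.Multiplicative_Group" "HOL-Number_Theory.Residues"
begin

(* Let c_N be the N-th coefficient of L_chi.  A monic g of degree N prime to x is determined by its
   roots in the algebraic closure, a Frobenius-stable multiset of N nonzero points, and chi_f(g) =
   psi(Tr sum f(1/beta)) is multiplicative in that multiset.  Splitting off one Frobenius orbit of length r
   through a point beta of F_{q^r}^*, every stable multiset of size N arises in exactly N ways, whence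
   N c_N = sum_{r=1}^N (S_r - 1) c_{N-r}, with S_r the character sum over F_{q^r}; the -1 accounts for
   beta = 0, where f(0) = 0.  So L_chi and (1 - z) exp(sum S_r z^r / r) have the same logarithmic derivative
   and the same constant term 1, hence coincide. *)

section \<open>Orbits of an injective map in multisets\<close>

definition stable_mset :: "('b \<Rightarrow> 'b) \<Rightarrow> 'b multiset \<Rightarrow> bool" where
  "stable_mset \<sigma> M \<longleftrightarrow> image_mset \<sigma> M = M"

definition orbit_mset :: "('b \<Rightarrow> 'b) \<Rightarrow> nat \<Rightarrow> 'b \<Rightarrow> 'b multiset" where
  "orbit_mset \<sigma> r x = image_mset (\<lambda>j. (\<sigma> ^^ j) x) (mset_set {..<r})"

lemma size_orbit_mset [simp]: "size (orbit_mset \<sigma> r x) = r"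
  by (simp add: orbit_mset_def)

lemma sum_orbit_mset: "(\<Sum>y\<in>#orbit_mset \<sigma> r x. g y) = (\<Sum>j<r. g ((\<sigma> ^^ j) x))"
  by (simp add: orbit_mset_def sum_unfold_sum_mset image_mset.compositionality o_def)

lemma mem_orbit_mset_self: "0 < r \<Longrightarrow> x \<in># orbit_mset \<sigma> r x"
  by (force simp: orbit_mset_def)

lemma orbit_mset_add:
  "orbit_mset \<sigma> (a + b) x = orbit_mset \<sigma> a x + orbit_mset \<sigma> b ((\<sigma> ^^ a) x)"
proof (induction b)
  case (Suc b)
  have "(\<sigma> ^^ (a + b)) x = (\<sigma> ^^ b) ((\<sigma> ^^ a) x)"
    by (metis add.commute comp_apply funpow_add)
  with Suc show ?case by (simp add: orbit_mset_def lessThan_Suc)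
qed (simp add: orbit_mset_def)

lemma orbit_mset_mult:
  assumes "(\<sigma> ^^ m) x = x"
  shows "orbit_mset \<sigma> (m * k) x = repeat_mset k (orbit_mset \<sigma> m x)"
  by (induction k) (simp_all add: orbit_mset_add assms add.commute, simp add: orbit_mset_def)

lemma image_orbit_mset: "image_mset \<sigma> (orbit_mset \<sigma> r x) = orbit_mset \<sigma> r (\<sigma> x)"
  by (simp add: orbit_mset_def image_mset.compositionality o_def funpow_swap1)

lemma stable_orbit_mset:
  assumes "(\<sigma> ^^ r) x = x"
  shows "stable_mset \<sigma> (orbit_mset \<sigma> r x)"
proof -
  have "orbit_mset \<sigma> (1 + r) x = orbit_mset \<sigma> (r + 1) x"
    by (simp only: add.commute)
  hence "{#x#} + orbit_mset \<sigma> r (\<sigma> x) = orbit_mset \<sigma> r x + {#x#}"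
    using assms by (simp only: orbit_mset_add) (simp add: orbit_mset_def)
  thus ?thesis
    by (simp add: stable_mset_def image_orbit_mset)
qed

lemma stable_mset_add: "stable_mset \<sigma> A \<Longrightarrow> stable_mset \<sigma> B \<Longrightarrow> stable_mset \<sigma> (A + B)"
  by (simp add: stable_mset_def)

lemma stable_mset_diff:
  "stable_mset \<sigma> A \<Longrightarrow> stable_mset \<sigma> B \<Longrightarrow> B \<subseteq># A \<Longrightarrow> stable_mset \<sigma> (A - B)"
  by (simp add: stable_mset_def image_mset_Diff)

lemma count_stable_mset_funpow:
  assumes "inj \<sigma>" "stable_mset \<sigma> M"
  shows "count M ((\<sigma> ^^ j) x) = count M x"
proof (induction j)
  case (Suc j)
  have "\<sigma> -` {\<sigma> ((\<sigma> ^^ j) x)} = {(\<sigma> ^^ j) x}"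
    using assms(1) by (auto dest: injD)
  hence "count (image_mset \<sigma> M) (\<sigma> ((\<sigma> ^^ j) x)) = count M ((\<sigma> ^^ j) x)"
    by (cases "(\<sigma> ^^ j) x \<in># M") (simp_all add: count_image_mset not_in_iff)
  moreover have "image_mset \<sigma> M = M"
    using assms(2) by (simp add: stable_mset_def)
  ultimately show ?case
    using Suc by simp
qed simp

lemma periodic_of_mem_stable_mset:
  assumes "inj \<sigma>" "stable_mset \<sigma> M" "x \<in># M"
  obtains n where "0 < n" "(\<sigma> ^^ n) x = x"
proof (rule funpow_inj_finite[OF assms(1)])
  have "{y. \<exists>n. y = (\<sigma> ^^ n) x} \<subseteq> set_mset M"
    using count_stable_mset_funpow[OF assms(1,2)] assms(3) by (auto simp flip: count_greater_zero_iff)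
  thus "finite {y. \<exists>n. y = (\<sigma> ^^ n) x}"
    using finite_subset by blast
qed

lemma inj_on_funpow_least_power:
  assumes "inj \<sigma>" "0 < n" "(\<sigma> ^^ n) x = x"
  shows "inj_on (\<lambda>j. (\<sigma> ^^ j) x) {..<least_power \<sigma> x}"
proof -
  have "i = j" if "i \<le> j" "j < least_power \<sigma> x" "(\<sigma> ^^ i) x = (\<sigma> ^^ j) x" for i j
  proof (rule ccontr)
    assume "i \<noteq> j"
    have "(\<sigma> ^^ (j - i)) x = x"
      using funpow_diff[OF assms(1) that(1,3)] .
    hence "least_power \<sigma> x \<le> j - i"
      by (rule least_power_le) (use \<open>i \<noteq> j\<close> that(1) in auto)
    thus False using that(2) by linarith
  qed
  thus ?thesis
    unfolding inj_on_def by (metis lessThan_iff nat_le_linear)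
qed

lemma orbit_mset_least_power_subseteq_iff:
  assumes "inj \<sigma>" "stable_mset \<sigma> M" "x \<in># M"
  shows "orbit_mset \<sigma> (least_power \<sigma> x * k) x \<subseteq># M \<longleftrightarrow> k \<le> count M x"
proof -
  obtain n where n: "0 < n" "(\<sigma> ^^ n) x = x"
    using periodic_of_mem_stable_mset[OF assms] .
  let ?d = "least_power \<sigma> x"
  let ?C = "(\<lambda>j. (\<sigma> ^^ j) x) ` {..<?d}"
  have "orbit_mset \<sigma> ?d x = mset_set ?C"
    unfolding orbit_mset_def by (rule image_mset_mset_set[OF inj_on_funpow_least_power[OF assms(1) n]])
  hence count_orbit: "count (orbit_mset \<sigma> (?d * k) x) y = (if y \<in> ?C then k else 0)" for y
    by (simp add: orbit_mset_mult[OF least_powerI(1)[OF n(2,1)]])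
  have x_in: "x \<in> ?C"
    using least_powerI(2)[OF n(2,1)] by force
  have count_C: "count M y = count M x" if "y \<in> ?C" for y
    using that count_stable_mset_funpow[OF assms(1,2)] by auto
  show ?thesis
  proof
    assume "orbit_mset \<sigma> (?d * k) x \<subseteq># M"
    thus "k \<le> count M x"
      using mset_subset_eq_count[of _ M x] count_orbit x_in by fastforce
  next
    assume "k \<le> count M x"
    thus "orbit_mset \<sigma> (?d * k) x \<subseteq># M"
      unfolding subseteq_mset_def count_orbit using count_C by simp
  qed
qed

lemma periods_of_mem_stable_mset:
  assumes "inj \<sigma>" "stable_mset \<sigma> M" "x \<in># M"
  shows "{r. 0 < r \<and> (\<sigma> ^^ r) x = x \<and> orbit_mset \<sigma> r x \<subseteq># M}
           = (\<lambda>k. least_power \<sigma> x * k) ` {1..count M x}"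
proof -
  obtain n where n: "0 < n" "(\<sigma> ^^ n) x = x"
    using periodic_of_mem_stable_mset[OF assms] .
  have d: "(\<sigma> ^^ least_power \<sigma> x) x = x" "0 < least_power \<sigma> x"
    using least_powerI[OF n(2,1)] by auto
  have multiple: "(\<sigma> ^^ (least_power \<sigma> x * k)) x = x" for k
    by (induction k) (simp_all add: funpow_add d(1))
  have periods: "0 < r \<and> (\<sigma> ^^ r) x = x \<longleftrightarrow> (\<exists>k>0. r = least_power \<sigma> x * k)" for r
  proof
    assume r: "0 < r \<and> (\<sigma> ^^ r) x = x"
    hence "least_power \<sigma> x dvd r"
      by (intro least_power_minimal) simp
    then obtain k where "r = least_power \<sigma> x * k" ..
    with r show "\<exists>k>0. r = least_power \<sigma> x * k"
      by (intro exI[of _ k]) simp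
  qed (use multiple d(2) in auto)
  show ?thesis
  proof (intro equalityI subsetI)
    fix r assume "r \<in> {r. 0 < r \<and> (\<sigma> ^^ r) x = x \<and> orbit_mset \<sigma> r x \<subseteq># M}"
    then obtain k where "0 < k" "r = least_power \<sigma> x * k" "orbit_mset \<sigma> r x \<subseteq># M"
      using periods by blast
    thus "r \<in> (\<lambda>k. least_power \<sigma> x * k) ` {1..count M x}"
      using orbit_mset_least_power_subseteq_iff[OF assms] by auto
  next
    fix r assume "r \<in> (\<lambda>k. least_power \<sigma> x * k) ` {1..count M x}"
    thus "r \<in> {r. 0 < r \<and> (\<sigma> ^^ r) x = x \<and> orbit_mset \<sigma> r x \<subseteq># M}"
      using orbit_mset_least_power_subseteq_iff[OF assms] multiple d(2) by auto
  qed
qed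

lemma card_periodic_orbits_in_stable_mset:
  assumes "inj \<sigma>" "stable_mset \<sigma> M"
  shows "card {(r, x). 0 < r \<and> (\<sigma> ^^ r) x = x \<and> orbit_mset \<sigma> r x \<subseteq># M} = size M"
proof -
  define R where "R x = {r. 0 < r \<and> (\<sigma> ^^ r) x = x \<and> orbit_mset \<sigma> r x \<subseteq># M}" for x
  have R: "finite (R x) \<and> card (R x) = count M x" if x: "x \<in># M" for x
  proof -
    obtain n where "0 < n" "(\<sigma> ^^ n) x = x"
      using periodic_of_mem_stable_mset[OF assms x] .
    hence "inj_on (\<lambda>k. least_power \<sigma> x * k) {1..count M x}"
      using least_powerI(2)[where f=\<sigma> and n=n and x=x] by (intro inj_onI) simp
    thus ?thesis
      unfolding R_def periods_of_mem_stable_mset[OF assms x] by (simp add: card_image)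
  qed
  have "{(r, x). 0 < r \<and> (\<sigma> ^^ r) x = x \<and> orbit_mset \<sigma> r x \<subseteq># M}
          = prod.swap ` (SIGMA x:set_mset M. R x)"
    by (force simp: R_def intro: mset_subset_eqD[OF _ mem_orbit_mset_self])
  also have "card \<dots> = (\<Sum>x\<in>set_mset M. card (R x))"
    using R by (simp add: card_image)
  also have "\<dots> = size M"
    using R by (simp add: size_multiset_overloaded_eq)
  finally show ?thesis .
qed

lemma sum_comp_const_card_fibres:
  assumes "finite T" "h ` T \<subseteq> S" "finite S" "\<And>s. s \<in> S \<Longrightarrow> card {t \<in> T. h t = s} = k"
  shows "(\<Sum>t\<in>T. g (h t)) = of_nat k * (\<Sum>s\<in>S. g s)"
proof -
  have "(\<Sum>t\<in>T. g (h t)) = (\<Sum>s\<in>S. \<Sum>t\<in>{t \<in> T. h t = s}. g (h t))"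
    using sum.group[OF assms(1,3,2), of "g \<circ> h"] by simp
  also have "\<dots> = (\<Sum>s\<in>S. of_nat k * g s)"
    by (intro sum.cong refl) (simp add: assms(4))
  finally show ?thesis
    by (simp add: sum_distrib_left)
qed

section \<open>Finite fields inside their algebraic closure\<close>

lemma two_le_card_field: "2 \<le> CARD('a::{field,finite})"
proof -
  have "card {0::'a, 1} \<le> CARD('a)"
    by (rule card_mono) auto
  thus ?thesis by simp
qed

lemma power_card_eq_self:
  fixes x :: "'a::{field,finite}"
  shows "x ^ CARD('a) = x"
proof (cases "x = 0")
  case False
  define K where "K = (ring_of_type_algebra :: 'a ring)"
  interpret field K
    unfolding K_def ..
  have pow: "y [^]\<^bsub>K\<^esub> k = y ^ k" for y :: 'a and k :: nat
    by (induction k) (simp_all add: K_def ring_of_type_algebra_def)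
  have "x [^]\<^bsub>Multiplicative_Group.mult_of K\<^esub> Coset.order (Multiplicative_Group.mult_of K) = (1::'a)"
    using group.pow_order_eq_1[OF field_mult_group] False by (simp add: K_def ring_of_type_algebra_def)
  hence "x ^ (CARD('a) - 1) = 1"
    by (simp only: Multiplicative_Group.nat_pow_mult_of pow order_mult_of[OF finite] Coset.order_def)
       (simp add: K_def ring_of_type_algebra_def)
  thus ?thesis
    using two_le_card_field[where 'a='a] by (simp add: power_eq_if)
qed simp

lemma funpow_power_eq: "((\<lambda>x. x ^ k) ^^ j) x = (x :: 'b::monoid_mult) ^ (k ^ j)"
  by (induction j) (simp_all add: power_mult[symmetric] mult.commute)

lemma
  fixes k :: nat
  assumes "2 \<le> k"
  shows finite_power_eq_self: "finite {x::'b::idom. x ^ k = x}"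
    and card_power_eq_self_le: "card {x::'b::idom. x ^ k = x} \<le> k"
proof -
  define P :: "'b poly" where "P = monom 1 k + [:0, -1:]"
  have deg: "degree P = k"
    using assms unfolding P_def by (subst degree_add_eq_left) (auto simp: degree_monom_eq)
  hence "P \<noteq> 0"
    using assms by auto
  moreover have roots: "{x. x ^ k = x} = {x. poly P x = 0}"
    by (simp add: P_def poly_monom)
  ultimately show "finite {x::'b. x ^ k = x}" "card {x::'b. x ^ k = x} \<le> k"
    using poly_roots_finite card_poly_roots_bound deg by fastforce+
qed

lemma fixed_points_power_card: "{x :: 'a::{field,finite} alg_closure. x ^ CARD('a) = x} = range to_ac"
proof -
  let ?S = "{x :: 'a alg_closure. x ^ CARD('a) = x}"
  have fin: "finite ?S"
    by (rule finite_power_eq_self[OF two_le_card_field])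
  have sub: "range to_ac \<subseteq> ?S"
    using power_card_eq_self to_ac_power by (metis (mono_tags, lifting) image_subsetI mem_Collect_eq)
  have "card ?S \<le> CARD('a)"
    by (rule card_power_eq_self_le[OF two_le_card_field])
  also have "CARD('a) = card (range (to_ac :: 'a \<Rightarrow> _))"
    by (simp add: card_image inj_to_ac)
  finally show ?thesis
    by (rule card_seteq[OF fin sub, symmetric])
qed

lemma finite_ext_field:
  assumes "0 < r"
  shows "finite (ext_field r :: 'a::{field,finite} alg_closure set)"
proof -
  have "CARD('a) \<le> CARD('a) ^ r"
    using assms two_le_card_field[where 'a='a] by (simp add: self_le_power)
  thus ?thesis
    unfolding ext_field_def using two_le_card_field[where 'a='a] by (simp add: finite_power_eq_self)
qed

lemma map_poly_mult_hom:
  fixes h :: "'b::comm_semiring_1 \<Rightarrow> 'c::comm_semiring_1"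
  assumes "h 0 = 0" "\<And>a b. h (a + b) = h a + h b" "\<And>a b. h (a * b) = h a * h b"
  shows "map_poly h (P * Q) = map_poly h P * map_poly h Q"
  by (intro poly_eqI)
     (simp add: coeff_map_poly coeff_mult assms(1,3) sum_comp_morphism[of h, OF assms(1,2), symmetric] o_def)

lemma degree_prod_mset_linear: "degree (\<Prod>x\<in>#A. [:-x, 1:]) = size (A :: 'b::idom multiset)"
  by (induction A) (simp_all add: degree_mult_eq image_iff del: mult_pCons_left)

lemma lead_coeff_prod_mset_linear: "lead_coeff (\<Prod>x\<in>#A. [:-x, 1:]) = (1 :: 'b::idom)"
  by (induction A) (simp_all add: lead_coeff_mult del: mult_pCons_left)

lemma proots_prod_mset_linear: "proots (\<Prod>x\<in>#A. [:-x, 1:]) = (A :: 'b::idom multiset)"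
  by (induction A) (simp_all add: proots_mult image_iff del: mult_pCons_left)

lemma monic_eq_prod_proots:
  fixes G :: "'b::alg_closed_field poly"
  assumes "lead_coeff G = 1"
  shows "G = (\<Prod>x\<in>#proots G. [:-x, 1:])"
proof -
  obtain A where "G = smult (lead_coeff G) (\<Prod>x\<in>#A. [:-x, 1:])"
    using alg_closed_imp_factorization[of G] assms by fastforce
  hence "G = (\<Prod>x\<in>#A. [:-x, 1:])"
    using assms by simp
  thus ?thesis
    by (simp add: proots_prod_mset_linear)
qed

lemma finite_degree_le: "finite {g :: 'b::{zero,finite} poly. degree g \<le> N}"
proof -
  have "g \<in> Poly ` {xs. set xs \<subseteq> UNIV \<and> length xs \<le> Suc N}" if "degree g \<le> N" for g :: "'b poly"
    using that by (cases "g = 0") (auto intro!: image_eqI[of _ _ "coeffs g"] simp: length_coeffs_degree)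
  thus ?thesis
    by (intro finite_surj[OF finite_lists_length_le[OF finite_class.finite_UNIV]]) blast
qed

section \<open>The Frobenius and roots of polynomials over a finite field\<close>

abbreviation frobenius :: "'a::{field,finite} alg_closure \<Rightarrow> 'a alg_closure" where
  "frobenius \<equiv> \<lambda>x. x ^ CARD('a)"

lemma frobenius_to_ac [simp]: "frobenius (to_ac a) = to_ac a"
  by (simp flip: to_ac_power add: power_card_eq_self)

lemma funpow_frobenius: "(frobenius ^^ r) x = x ^ (CARD('a) ^ r)" for x :: "'a::{field,finite} alg_closure"
  by (rule funpow_power_eq)

lemma ext_field_eq_periodic: "ext_field r = {x :: 'a::{field,finite} alg_closure. (frobenius ^^ r) x = x}"
  by (simp add: ext_field_def funpow_frobenius)

definition monic_coprime_X :: "nat \<Rightarrow> 'a::{field,finite} poly set" where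
  "monic_coprime_X N = {g. lead_coeff g = 1 \<and> degree g = N \<and> \<not> [:0, 1:] dvd g}"

definition stable_root_msets :: "nat \<Rightarrow> 'a::{field,finite} alg_closure multiset set" where
  "stable_root_msets N = {M. stable_mset frobenius M \<and> 0 \<notin># M \<and> size M = N}"

lemma stable_root_msets_0: "stable_root_msets 0 = {{#}}"
  by (auto simp: stable_root_msets_def stable_mset_def)

lemma finite_monic_coprime_X: "finite (monic_coprime_X N)"
  by (rule finite_subset[OF _ finite_degree_le[of N]]) (auto simp: monic_coprime_X_def)

lemma degree_map_to_ac [simp]: "degree (map_poly to_ac g) = degree g"
  by (simp add: degree_map_poly)

lemma coeff_map_to_ac [simp]: "coeff (map_poly to_ac g) i = to_ac (coeff g i)"
  by (simp add: coeff_map_poly)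

lemma poly_map_to_ac_0_eq_0_iff: "poly (map_poly to_ac g) 0 = 0 \<longleftrightarrow> [:0, 1:] dvd g"
  by (simp add: dvd_iff_poly_eq_0 poly_0_coeff_0)

context
  fixes p n :: nat
  assumes prime_p: "prime p" and card_eq: "CARD('a::{field,finite}) = p ^ n"
begin

lemma CHAR_eq: "CHAR('a) = p"
proof -
  have "prime CHAR('a)"
    by (simp add: finite_imp_CHAR_pos prime_CHAR_semidom)
  moreover have "CHAR('a) dvd p ^ n"
    using CHAR_dvd_CARD[where 'a='a] card_eq by simp
  ultimately show ?thesis
    using prime_p prime_dvd_power primes_dvd_imp_eq by blast
qed

lemma sum_power_prime_power: "sum g A ^ (p ^ m) = (\<Sum>i\<in>A. g i ^ (p ^ m))"
  for g :: "'b \<Rightarrow> 'a alg_closure"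
  by (rule freshmans_dream_sum') (simp_all add: CHAR_eq prime_p)

lemma add_power_prime_power: "(x + y) ^ (p ^ m) = x ^ (p ^ m) + y ^ (p ^ m)"
  for x y :: "'a alg_closure"
  by (rule freshmans_dream') (simp_all add: CHAR_eq prime_p)

lemma frobenius_add: "frobenius (x + y) = frobenius x + frobenius y" for x y :: "'a alg_closure"
  by (simp only: card_eq add_power_prime_power)

lemma frobenius_sum: "frobenius (sum g A) = (\<Sum>i\<in>A. frobenius (g i))"
  for g :: "'b \<Rightarrow> 'a alg_closure"
  by (simp only: card_eq sum_power_prime_power)

lemma frobenius_sum_mset: "frobenius (\<Sum>y\<in>#M. g y) = (\<Sum>y\<in>#M. frobenius (g y))"
  for g :: "'b \<Rightarrow> 'a alg_closure"
  by (induction M) (simp_all add: frobenius_add two_le_card_field[where 'a='a])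

lemma frobenius_uminus: "frobenius (- x) = - frobenius x" for x :: "'a alg_closure"
proof -
  have "frobenius x + frobenius (- x) = 0"
    using frobenius_add[of x "- x"] two_le_card_field[where 'a='a] by (simp add: power_0_left)
  thus ?thesis
    by (simp add: eq_neg_iff_add_eq_0 add.commute)
qed

lemma inj_frobenius: "inj (frobenius :: 'a alg_closure \<Rightarrow> _)"
proof (rule injI)
  fix x y :: "'a alg_closure"
  assume "frobenius x = frobenius y"
  hence "frobenius (x - y) = 0"
    using frobenius_add[of "x - y" y] by simp
  thus "x = y" by simp
qed

lemma frobenius_poly: "frobenius (poly (map_poly to_ac g) x) = poly (map_poly to_ac g) (frobenius x)"
  for g :: "'a poly"
  by (simp add: poly_altdef frobenius_sum coeff_map_poly power_mult_distrib
      flip: power_mult to_ac_power, simp add: power_card_eq_self mult.commute)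

lemma abs_trace_add: "abs_trace p m (a + b) = abs_trace p m a + abs_trace p m b"
  for a b :: "'a alg_closure"
  by (simp add: abs_trace_def add_power_prime_power sum.distrib)

lemma abs_trace_zero: "abs_trace p m (0 :: 'a alg_closure) = 0"
  using prime_gt_0_nat[OF prime_p] by (simp add: abs_trace_def power_0_left)

lemma abs_trace_mem_prime_field:
  fixes y :: "'a alg_closure"
  assumes "frobenius y = y"
  shows "abs_trace p n y \<in> prime_field p"
proof -
  define g where "g i = y ^ (p ^ i)" for i
  have "abs_trace p n y ^ p = (\<Sum>i<n. g (Suc i))"
    using sum_power_prime_power[of "\<lambda>i. y ^ (p ^ i)" "{..<n}" 1]
    by (simp add: abs_trace_def g_def power_mult[symmetric] mult.commute)
  also have "\<dots> = (\<Sum>i<n. g i) + g n - g 0"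
    using sum.lessThan_Suc_shift[of g n] sum.lessThan_Suc[of g n] by (simp add: algebra_simps)
  also have "g n = g 0"
    using assms card_eq by (simp add: g_def)
  finally show ?thesis
    by (simp add: prime_field_def abs_trace_def g_def)
qed

(* Transitivity of the trace: the conjugates y ^ p ^ (i + j * n) with i < n and j < r are exactly the
   y ^ p ^ k with k < n * r. *)
lemma abs_trace_sum_frobenius_conjugates:
  "abs_trace p n (\<Sum>j<r. (frobenius ^^ j) y) = abs_trace p (n * r) y" for y :: "'a alg_closure"
proof -
  have "abs_trace p n (\<Sum>j<r. (frobenius ^^ j) y) = (\<Sum>i<n. \<Sum>j<r. y ^ (p ^ (i + j * n)))"
    unfolding abs_trace_def sum_power_prime_power funpow_power_eq card_eq
    by (simp add: power_mult[symmetric] power_add[symmetric] mult.commute)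
  also have "\<dots> = (\<Sum>j<r. \<Sum>i<n. y ^ (p ^ (i + j * n)))"
    by (rule sum.swap)
  also have "\<dots> = (\<Sum>j<r. \<Sum>k\<in>{j * n..<j * n + n}. y ^ (p ^ k))"
  proof (rule sum.cong[OF refl])
    fix j
    show "(\<Sum>i<n. y ^ (p ^ (i + j * n))) = (\<Sum>k\<in>{j * n..<j * n + n}. y ^ (p ^ k))"
      using sum.shift_bounds_nat_ivl[of "\<lambda>k. y ^ (p ^ k)" 0 "j * n" n]
      by (simp add: atLeast0LessThan add.commute)
  qed
  also have "\<dots> = abs_trace p (n * r) y"
    unfolding abs_trace_def by (subst sum.nat_group) (simp add: mult.commute)
  finally show ?thesis .
qed

lemma map_poly_frobenius_mult: "map_poly frobenius (P * Q) = map_poly frobenius P * map_poly frobenius Q"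
  for P Q :: "'a alg_closure poly"
  by (rule map_poly_mult_hom) (simp_all add: frobenius_add power_mult_distrib power_0_left)

lemma map_poly_frobenius_prod_linear:
  "map_poly frobenius (\<Prod>x\<in>#A. [:-x, 1:]) = (\<Prod>x\<in>#image_mset frobenius A. [:-x, 1:])"
  for A :: "'a alg_closure multiset"
  by (induction A) (simp_all add: map_poly_frobenius_mult map_poly_pCons frobenius_uminus power_0_left
      del: mult_pCons_left)

lemma proots_map_to_ac_mem_stable_root_msets:
  fixes g :: "'a poly"
  assumes "g \<in> monic_coprime_X N"
  shows "proots (map_poly to_ac g) \<in> stable_root_msets N"
proof -
  define A where "A = proots (map_poly to_ac g)"
  have g: "lead_coeff g = 1" "degree g = N" "\<not> [:0, 1:] dvd g"
    using assms unfolding monic_coprime_X_def by blast+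
  have monic: "lead_coeff (map_poly to_ac g) = 1"
    using g(1) by simp
  hence G: "map_poly to_ac g = (\<Prod>x\<in>#A. [:-x, 1:])"
    unfolding A_def by (rule monic_eq_prod_proots)
  have "(\<Prod>x\<in>#image_mset frobenius A. [:-x, 1:]) = map_poly frobenius (map_poly to_ac g)"
    unfolding G by (rule map_poly_frobenius_prod_linear[symmetric])
  also have "\<dots> = (\<Prod>x\<in>#A. [:-x, 1:])"
    unfolding G[symmetric] by (intro poly_eqI) (simp add: coeff_map_poly power_0_left)
  finally have "proots (\<Prod>x\<in>#image_mset frobenius A. [:-x, 1:]) = proots (\<Prod>x\<in>#A. [:-x, 1:])"
    by (rule arg_cong)
  hence "stable_mset frobenius A"
    by (simp only: proots_prod_mset_linear stable_mset_def)
  moreover have "0 \<notin># A"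
  proof -
    have "map_poly to_ac g \<noteq> 0"
      using monic by force
    moreover have "poly (map_poly to_ac g) 0 \<noteq> 0"
      using g(3) poly_map_to_ac_0_eq_0_iff by blast
    ultimately show ?thesis
      by (simp add: A_def)
  qed
  moreover have "size A = N"
    using arg_cong[OF G, of degree] g(2) by (simp add: degree_prod_mset_linear)
  ultimately show ?thesis
    by (simp add: stable_root_msets_def A_def)
qed

lemma inj_on_proots_map_to_ac: "inj_on (\<lambda>g :: 'a poly. proots (map_poly to_ac g)) (monic_coprime_X N)"
proof (rule inj_onI)
  fix g h :: "'a poly"
  assume g: "g \<in> monic_coprime_X N" and h: "h \<in> monic_coprime_X N"
    and eq: "proots (map_poly to_ac g) = proots (map_poly to_ac h)"
  have "lead_coeff g = 1" "lead_coeff h = 1"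
    using g h unfolding monic_coprime_X_def by blast+
  hence "lead_coeff (map_poly to_ac g) = 1" "lead_coeff (map_poly to_ac h) = 1"
    by simp_all
  hence "map_poly to_ac g = map_poly to_ac h"
    using monic_eq_prod_proots eq by metis
  thus "g = h"
    by (intro poly_eqI) (metis coeff_map_to_ac to_ac_eq_iff)
qed

lemma stable_root_msets_subset_image:
  fixes M :: "'a alg_closure multiset"
  assumes "M \<in> stable_root_msets N"
  shows "M \<in> (\<lambda>g :: 'a poly. proots (map_poly to_ac g)) ` monic_coprime_X N"
proof -
  define P where "P = (\<Prod>x\<in>#M. [:-x, 1:])"
  have M: "image_mset frobenius M = M" "0 \<notin># M" "size M = N"
    using assms by (simp_all add: stable_root_msets_def stable_mset_def)
  have "map_poly frobenius P = P"
    unfolding P_def map_poly_frobenius_prod_linear M(1) ..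
  hence "coeff P i \<in> range to_ac" for i
    using coeff_map_poly[of frobenius P i] by (simp add: power_0_left flip: fixed_points_power_card)
  hence P: "map_poly to_ac (map_poly of_ac P) = P"
    by (intro poly_eqI) (simp add: coeff_map_poly to_ac_of_ac)
  define g where "g = map_poly of_ac P"
  have "to_ac (lead_coeff g) = 1"
    using P lead_coeff_prod_mset_linear[of M] unfolding g_def P_def by (metis coeff_map_to_ac degree_map_to_ac)
  moreover have "degree g = N"
    using P degree_prod_mset_linear[of M] M(3) unfolding g_def P_def by (metis degree_map_to_ac)
  moreover have "poly P 0 \<noteq> 0"
    using M(2) by (simp add: P_def poly_prod_mset image_iff)
  hence "\<not> [:0, 1:] dvd g"
    using P by (simp add: g_def flip: poly_map_to_ac_0_eq_0_iff)
  ultimately have "g \<in> monic_coprime_X N"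
    by (simp add: monic_coprime_X_def)
  moreover have "proots (map_poly to_ac g) = M"
    using P by (simp add: g_def P_def proots_prod_mset_linear)
  ultimately show ?thesis
    by blast
qed

lemma bij_betw_proots_map_to_ac:
  "bij_betw (\<lambda>g :: 'a poly. proots (map_poly to_ac g)) (monic_coprime_X N) (stable_root_msets N)"
  unfolding bij_betw_def
  using inj_on_proots_map_to_ac proots_map_to_ac_mem_stable_root_msets stable_root_msets_subset_image
  by blast

lemma finite_stable_root_msets: "finite (stable_root_msets N :: 'a alg_closure multiset set)"
  using bij_betw_finite[OF bij_betw_proots_map_to_ac] finite_monic_coprime_X by blast

lemma orbit_remainder_mem_stable_root_msets:
  fixes M :: "'a alg_closure multiset"
  assumes "M \<in> stable_root_msets N" "0 < r" "(frobenius ^^ r) \<beta> = \<beta>" "orbit_mset frobenius r \<beta> \<subseteq># M"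
  shows "r \<in> {1..N}" "\<beta> \<in> ext_field r - {0}" "M - orbit_mset frobenius r \<beta> \<in> stable_root_msets (N - r)"
proof -
  have M: "stable_mset frobenius M" "0 \<notin># M" "size M = N"
    using assms(1) by (simp_all add: stable_root_msets_def)
  have "\<beta> \<in># M"
    using mset_subset_eqD[OF assms(4) mem_orbit_mset_self[OF assms(2)]] .
  thus "\<beta> \<in> ext_field r - {0}"
    using M(2) assms(3) by (auto simp: ext_field_eq_periodic)
  show "r \<in> {1..N}"
    using size_mset_mono[OF assms(4)] M(3) assms(2) by simp
  show "M - orbit_mset frobenius r \<beta> \<in> stable_root_msets (N - r)"
    using M size_Diff_submset[OF assms(4)] stable_mset_diff[OF M(1) stable_orbit_mset[OF assms(3)] assms(4)]
    by (auto simp: stable_root_msets_def dest: in_diffD)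
qed

lemma card_orbit_decompositions:
  fixes M :: "'a alg_closure multiset"
  assumes "M \<in> stable_root_msets N"
  shows "card {(r, \<beta>, M'). r \<in> {1..N} \<and> \<beta> \<in> ext_field r - {0} \<and> M' \<in> stable_root_msets (N - r)
                          \<and> orbit_mset frobenius r \<beta> + M' = M} = N"
proof -
  let ?P = "{(r, \<beta>). 0 < r \<and> (frobenius ^^ r) \<beta> = \<beta> \<and> orbit_mset frobenius r \<beta> \<subseteq># M}"
  have "bij_betw (\<lambda>(r, \<beta>, M'). (r, \<beta>))
          {(r, \<beta>, M'). r \<in> {1..N} \<and> \<beta> \<in> ext_field r - {0} \<and> M' \<in> stable_root_msets (N - r)
                        \<and> orbit_mset frobenius r \<beta> + M' = M} ?P"
  proof (rule bij_betw_byWitness[where f' = "\<lambda>(r, \<beta>). (r, \<beta>, M - orbit_mset frobenius r \<beta>)"])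
    show "(\<lambda>(r, \<beta>, M'). (r, \<beta>)) ` {(r, \<beta>, M'). r \<in> {1..N} \<and> \<beta> \<in> ext_field r - {0}
            \<and> M' \<in> stable_root_msets (N - r) \<and> orbit_mset frobenius r \<beta> + M' = M} \<subseteq> ?P"
      by (auto simp: ext_field_eq_periodic)
    show "(\<lambda>(r, \<beta>). (r, \<beta>, M - orbit_mset frobenius r \<beta>)) ` ?P \<subseteq> {(r, \<beta>, M'). r \<in> {1..N}
            \<and> \<beta> \<in> ext_field r - {0} \<and> M' \<in> stable_root_msets (N - r) \<and> orbit_mset frobenius r \<beta> + M' = M}"
      using orbit_remainder_mem_stable_root_msets[OF assms] by (auto simp: subset_mset.add_diff_inverse)
  qed auto
  hence "card {(r, \<beta>, M'). r \<in> {1..N} \<and> \<beta> \<in> ext_field r - {0} \<and> M' \<in> stable_root_msets (N - r)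
             \<and> orbit_mset frobenius r \<beta> + M' = M} = card ?P"
    by (rule bij_betw_same_card)
  also have "\<dots> = N"
    using card_periodic_orbits_in_stable_mset[OF inj_frobenius] assms by (simp add: stable_root_msets_def)
  finally show ?thesis .
qed

end

section \<open>Formal power series with a prescribed logarithmic derivative\<close>

lemma fps_deriv_eq_mult_unique:
  fixes U V D :: "'b::field_char_0 fps"
  assumes "U $ 0 = V $ 0" "fps_deriv U = U * D" "fps_deriv V = V * D"
  shows "U = V"
proof (rule fps_ext)
  fix N
  show "U $ N = V $ N"
  proof (induction N rule: less_induct)
    case (less N)
    show ?case
    proof (cases N)
      case (Suc m)
      have "of_nat (Suc m) * U $ Suc m = (U * D) $ m"
        using arg_cong[OF assms(2), of "\<lambda>F. F $ m"] by simp
      also have "\<dots> = (V * D) $ m"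
        unfolding fps_mult_nth using less Suc by (intro sum.cong refl) auto
      also have "\<dots> = of_nat (Suc m) * V $ Suc m"
        using arg_cong[OF assms(3), of "\<lambda>F. F $ m"] by simp
      finally show ?thesis
        using Suc by (simp del: of_nat_Suc)
    qed (use assms(1) in simp)
  qed
qed

lemma fps_deriv_Abs_fps_of_recurrence:
  fixes c a :: "nat \<Rightarrow> 'b::comm_ring_1"
  assumes "\<And>N. 0 < N \<Longrightarrow> of_nat N * c N = (\<Sum>r=1..N. a r * c (N - r))"
  shows "fps_deriv (Abs_fps c) = Abs_fps c * Abs_fps (\<lambda>k. a (Suc k))"
proof (rule fps_ext)
  fix m
  have "fps_deriv (Abs_fps c) $ m = (\<Sum>r=1..Suc m. a r * c (Suc m - r))"
    using assms[of "Suc m"] by simp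
  also have "\<dots> = (\<Sum>i=0..m. c i * a (Suc (m - i)))"
    by (rule sum.reindex_bij_witness[of _ "\<lambda>i. Suc m - i" "\<lambda>r. Suc m - r"]) (auto simp: Suc_diff_le)
  also have "\<dots> = (Abs_fps c * Abs_fps (\<lambda>k. a (Suc k))) $ m"
    by (simp add: fps_mult_nth)
  finally show "fps_deriv (Abs_fps c) $ m = (Abs_fps c * Abs_fps (\<lambda>k. a (Suc k))) $ m" .
qed

lemma fps_deriv_one_minus_X_mult_exp_compose:
  fixes A :: "'b::field_char_0 fps"
  assumes "A $ 0 = 0"
  shows "fps_deriv ((1 - fps_X) * (fps_exp 1 oo A))
           = ((1 - fps_X) * (fps_exp 1 oo A)) * (fps_deriv A - Abs_fps (\<lambda>_. 1))"
proof -
  let ?E = "fps_exp 1 oo A"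
  have geometric: "(1 - fps_X) * Abs_fps (\<lambda>_. 1 :: 'b) = 1"
    by (rule fps_ext) (simp add: algebra_simps)
  have "fps_deriv ((1 - fps_X) * ?E) = (1 - fps_X) * ?E * fps_deriv A - ?E"
    by (simp add: fps_compose_deriv[OF assms] algebra_simps)
  also have "\<dots> = (1 - fps_X) * ?E * fps_deriv A - ?E * ((1 - fps_X) * Abs_fps (\<lambda>_. 1))"
    by (simp add: geometric)
  finally show ?thesis
    by (simp add: algebra_simps)
qed

section \<open>The two L-functions\<close>

locale char_sum_L_functions =
  fixes p n :: nat and \<psi> :: "'a::{field,finite} alg_closure \<Rightarrow> complex" and f :: "'a poly"
  assumes prime_p: "prime p" and card_eq: "CARD('a) = p ^ n"
    and nontriv_add_char: "nontriv_add_char p \<psi>" and coeff_f_0: "coeff f 0 = 0"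
begin

lemma psi_add: "x \<in> prime_field p \<Longrightarrow> y \<in> prime_field p \<Longrightarrow> \<psi> (x + y) = \<psi> x * \<psi> y"
  using nontriv_add_char unfolding nontriv_add_char_def by blast

lemma psi_zero: "\<psi> 0 = 1"
proof -
  have zero: "0 \<in> prime_field p"
    using prime_gt_0_nat[OF prime_p] by (simp add: prime_field_def)
  hence "\<psi> 0 = \<psi> 0 * \<psi> 0"
    using psi_add[OF zero zero] by simp
  moreover have "\<psi> 0 \<noteq> 0"
    using nontriv_add_char zero unfolding nontriv_add_char_def by blast
  ultimately show ?thesis
    by simp
qed

definition root_weight :: "'a alg_closure multiset \<Rightarrow> complex" where
  "root_weight M = \<psi> (abs_trace p n (\<Sum>\<beta>\<in>#M. poly (map_poly to_ac f) (inverse \<beta>)))"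

lemma frobenius_sum_inverse_roots:
  assumes "stable_mset frobenius M"
  shows "frobenius (\<Sum>\<beta>\<in>#M. poly (map_poly to_ac f) (inverse \<beta>)) = (\<Sum>\<beta>\<in>#M. poly (map_poly to_ac f) (inverse \<beta>))"
proof -
  have "frobenius (\<Sum>\<beta>\<in>#M. poly (map_poly to_ac f) (inverse \<beta>))
          = (\<Sum>\<beta>\<in>#image_mset frobenius M. poly (map_poly to_ac f) (inverse \<beta>))"
    by (simp add: frobenius_sum_mset[OF prime_p card_eq] frobenius_poly[OF prime_p card_eq]
        image_mset.compositionality o_def power_inverse)
  thus ?thesis
    using assms by (simp add: stable_mset_def)
qed

lemma root_weight_add:
  assumes "stable_mset frobenius A" "stable_mset frobenius B"
  shows "root_weight (A + B) = root_weight A * root_weight B"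
  unfolding root_weight_def image_mset_union sum_mset.union abs_trace_add[OF prime_p card_eq]
  by (intro psi_add abs_trace_mem_prime_field[OF prime_p card_eq] frobenius_sum_inverse_roots assms)

lemma root_weight_orbit_mset:
  "root_weight (orbit_mset frobenius r \<beta>) = \<psi> (abs_trace p (n * r) (poly (map_poly to_ac f) (inverse \<beta>)))"
proof -
  have "(frobenius ^^ j) (poly (map_poly to_ac f) (inverse \<beta>)) = poly (map_poly to_ac f) (inverse ((frobenius ^^ j) \<beta>))" for j
    by (induction j) (simp_all add: frobenius_poly[OF prime_p card_eq] power_inverse)
  thus ?thesis
    unfolding root_weight_def sum_orbit_mset
    by (simp flip: abs_trace_sum_frobenius_conjugates[OF prime_p card_eq])
qed

lemma coeff_L_chi: "L_chi (chi_f p n \<psi> f) $ N = (\<Sum>M\<in>stable_root_msets N. root_weight M)"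
proof -
  have "L_chi (chi_f p n \<psi> f) $ N = (\<Sum>g | lead_coeff g = 1 \<and> degree g = N. chi_f p n \<psi> f g)"
    by (simp add: L_chi_def)
  also have "\<dots> = (\<Sum>g\<in>monic_coprime_X N. chi_f p n \<psi> f g)"
  proof (rule sum.mono_neutral_right)
    show "finite {g :: 'a poly. lead_coeff g = 1 \<and> degree g = N}"
      by (rule finite_subset[OF _ finite_degree_le[of N]]) auto
  qed (auto simp: monic_coprime_X_def chi_f_def)
  also have "\<dots> = (\<Sum>g\<in>monic_coprime_X N. root_weight (proots (map_poly to_ac g)))"
    by (intro sum.cong refl) (simp add: monic_coprime_X_def chi_f_def root_weight_def)
  also have "\<dots> = (\<Sum>M\<in>stable_root_msets N. root_weight M)"
    by (rule sum.reindex_bij_betw[OF bij_betw_proots_map_to_ac[OF prime_p card_eq]])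
  finally show ?thesis .
qed

lemma char_sum_eq:
  assumes "0 < r"
  shows "char_sum p n \<psi> f r = 1 + (\<Sum>\<beta>\<in>ext_field r - {0}. root_weight (orbit_mset frobenius r \<beta>))"
proof -
  let ?g = "\<lambda>\<alpha>. \<psi> (abs_trace p (n * r) (poly (map_poly to_ac f) \<alpha>))"
  have "0 \<in> ext_field r"
    using assms by (simp add: ext_field_def)
  hence "char_sum p n \<psi> f r = ?g 0 + (\<Sum>\<alpha>\<in>ext_field r - {0}. ?g \<alpha>)"
    unfolding char_sum_def by (rule sum.remove[OF finite_ext_field[OF assms]])
  also have "?g 0 = 1"
    by (simp add: poly_0_coeff_0 coeff_f_0 abs_trace_zero[OF prime_p card_eq] psi_zero)
  also have "(\<Sum>\<alpha>\<in>ext_field r - {0}. ?g \<alpha>) = (\<Sum>\<beta>\<in>ext_field r - {0}. ?g (inverse \<beta>))"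
    by (rule sum.reindex_bij_witness[of _ inverse inverse]) (auto simp: ext_field_def power_inverse)
  also have "\<dots> = (\<Sum>\<beta>\<in>ext_field r - {0}. root_weight (orbit_mset frobenius r \<beta>))"
    by (simp add: root_weight_orbit_mset)
  finally show ?thesis .
qed

(* Coefficientwise form of the logarithmic derivative of the Euler product: the pairs consisting of a
   Frobenius orbit of length r through a point of F_{q^r}^* and a stable remainder of size N - r cover each
   stable multiset of size N exactly N times. *)
lemma L_chi_coeff_recurrence:
  assumes "0 < N"
  shows "of_nat N * L_chi (chi_f p n \<psi> f) $ N
           = (\<Sum>r=1..N. (char_sum p n \<psi> f r - 1) * L_chi (chi_f p n \<psi> f) $ (N - r))"
proof -
  define T :: "(nat \<times> 'a alg_closure \<times> 'a alg_closure multiset) set"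
    where "T = (SIGMA r:{1..N}. SIGMA \<beta>:ext_field r - {0}. stable_root_msets (N - r))"
  define h :: "nat \<times> 'a alg_closure \<times> 'a alg_closure multiset \<Rightarrow> 'a alg_closure multiset"
    where "h = (\<lambda>(r, \<beta>, M'). orbit_mset frobenius r \<beta> + M')"
  have fin: "finite T"
    unfolding T_def
    by (intro finite_SigmaI) (auto intro: finite_ext_field finite_stable_root_msets[OF prime_p card_eq])
  have orbit: "stable_mset frobenius (orbit_mset frobenius r \<beta>)" "0 \<notin># orbit_mset frobenius r \<beta>"
    if "\<beta> \<in> ext_field r - {0}" for r and \<beta> :: "'a alg_closure"
    using that stable_orbit_mset[where \<sigma>=frobenius and r=r and x=\<beta>]
    by (auto simp: ext_field_eq_periodic orbit_mset_def funpow_frobenius)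
  have h_T: "h ` T \<subseteq> stable_root_msets N"
    using orbit by (auto simp: T_def h_def stable_root_msets_def stable_mset_add)
  have "(\<Sum>r=1..N. (char_sum p n \<psi> f r - 1) * L_chi (chi_f p n \<psi> f) $ (N - r))
          = (\<Sum>r=1..N. \<Sum>\<beta>\<in>ext_field r - {0}. \<Sum>M'\<in>stable_root_msets (N - r).
               root_weight (orbit_mset frobenius r \<beta> + M'))"
    by (intro sum.cong refl)
       (simp add: char_sum_eq coeff_L_chi sum_product root_weight_add orbit stable_root_msets_def)
  also have "\<dots> = (\<Sum>t\<in>T. root_weight (h t))"
    unfolding T_def h_def
    by (simp add: sum.Sigma finite_ext_field finite_stable_root_msets[OF prime_p card_eq] split_def)
  also have "\<dots> = of_nat N * (\<Sum>M\<in>stable_root_msets N. root_weight M)"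
  proof (rule sum_comp_const_card_fibres[OF fin h_T finite_stable_root_msets[OF prime_p card_eq]])
    fix M :: "'a alg_closure multiset"
    assume M: "M \<in> stable_root_msets N"
    have fibre: "{t \<in> T. h t = M} = {(r, \<beta>, M'). r \<in> {1..N} \<and> \<beta> \<in> ext_field r - {0}
                   \<and> M' \<in> stable_root_msets (N - r) \<and> orbit_mset frobenius r \<beta> + M' = M}"
      by (auto simp: T_def h_def)
    show "card {t \<in> T. h t = M} = N"
      unfolding fibre by (rule card_orbit_decompositions[OF prime_p card_eq M])
  qed
  finally show ?thesis
    by (simp add: coeff_L_chi)
qed

end

theorem lemma11:
  fixes p n d :: nat
    and \<psi> :: "'a::{field,finite} alg_closure \<Rightarrow> complex"
    and f :: "'a poly"
  assumes "prime p"
    and "CARD('a) = p ^ n"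
    and "coprime d p"
    and "nontriv_add_char p \<psi>"
    and "f \<in> calF p d"
  shows "L_chi (chi_f p n \<psi> f) = (1 - fps_X) * L_f_psi p n \<psi> f"
proof -
  have "coeff f 0 = 0"
    using assms(5) by (simp add: calF_def)
  then interpret char_sum_L_functions p n \<psi> f
    using assms(1,2,4) by unfold_locales
  define A where "A = Abs_fps (\<lambda>r. if r = 0 then 0 else char_sum p n \<psi> f r / of_nat r)"
  define D where "D = fps_deriv A - Abs_fps (\<lambda>_. 1)"
  have "D = Abs_fps (\<lambda>k. char_sum p n \<psi> f (Suc k) - 1)"
    by (rule fps_ext) (simp add: D_def A_def del: of_nat_Suc)
  hence deriv_L_chi: "fps_deriv (L_chi (chi_f p n \<psi> f)) = L_chi (chi_f p n \<psi> f) * D"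
    using fps_deriv_Abs_fps_of_recurrence[where c = "fps_nth (L_chi (chi_f p n \<psi> f))", OF L_chi_coeff_recurrence]
    by (simp add: fps_nth_inverse)
  have deriv_L_f_psi: "fps_deriv ((1 - fps_X) * L_f_psi p n \<psi> f) = ((1 - fps_X) * L_f_psi p n \<psi> f) * D"
    unfolding D_def L_f_psi_def A_def[symmetric] by (rule fps_deriv_one_minus_X_mult_exp_compose) (simp add: A_def)
  have "L_chi (chi_f p n \<psi> f) $ 0 = 1"
    by (simp add: coeff_L_chi stable_root_msets_0 root_weight_def psi_zero abs_trace_zero[OF prime_p card_eq])
  moreover have "((1 - fps_X) * L_f_psi p n \<psi> f) $ 0 = 1"
    by (simp add: L_f_psi_def)
  ultimately show ?thesis
    using fps_deriv_eq_mult_unique[OF _ deriv_L_chi deriv_L_f_psi] by simp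
qed

end
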